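(* Let $\beta>1$ and let $\epsilon>0$ be fixed and arbitrarily small. The rate $R=(p_c-2\epsilon)(1-1/\beta)$ is achievable for the outer channel. More precisely, take $k=n(p_c-2\epsilon)$ and $w=l-\log_2 n=l(1-1/\beta)$, assuming integrality. Then there is a family of codes with these parameters such that $\mathbb{P}(\widehat{\mathbf{U}}\ne\mathbf{U})\to 0$ as $n\to\infty$.
   Context: The outer channel takes as input a binary matrix $\mathbf{X}\in\mathbb{F}_2^{n\times l}$ with rows $\mathbf{x}_1,\dots,\mathbf{x}_n$ and acts in two stages. Channel-1 acts independently on each row and outputs $\mathbf{y}_i$, where - $\mathbf{y}_i=\mathbf{x}_i$ with probability $p_c$; - $\mathbf{y}_i=?$ (an erased row) with probability $p_e$; - $\mathbf{y}_i=\mathbf{e}$ with probability $p_s/(2^l-1)$ for each $\mathbf{e}\in\mathbb{F}_2^l\setminus\{\mathbf{x}_i\}$. Here $p_c+p_e+p_s=1$, the probabilities $p_c,p_e,p_s$ are fixed, and $p_c>p_s/(2^l-1)$. Channel-2 takes the $n$-row matrix $\mathbf{Y}$ (erased rows kept as "?") and outputs $\mathbf{Z}$, a uniformly random permutation of its rows (each of the $n!$ permutations has probability $1/n!$). A code maps $\mathbf{U}\in\mathbb{F}_2^{k\times w}$ injectively to $\mathbf{X}\in\mathbb{F}_2^{n\times l}$ and comes with a decoder $\mathbf{Z}\mapsto\widehat{\mathbf{U}}$. Its rate is $R=kw/(nl)$. We set $\beta=l/\log_2 n$, held fixed as $n\to\infty$. A rate $R$ is achievable if some family of rate-$R$ codes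 has error probability, for uniformly distributed $\mathbf{U}$, tending to $0$ as $n\to\infty$. *)

theory Defs
  imports "HOL-Probability.Probability" "HOL-Combinatorics.Permutations"
begin

text \<open>Rows of binary matrices are bool lists of length l; an n x l matrix is a list
of n rows. A channel-1 output row is an option: None is the erased row "?".\<close>

definition is_matrix :: "nat \<Rightarrow> nat \<Rightarrow> bool list list \<Rightarrow> bool" where
  "is_matrix r c M \<longleftrightarrow> length M = r \<and> (\<forall>row\<in>set M. length row = c)"

definition ch1_row :: "real \<Rightarrow> real \<Rightarrow> real \<Rightarrow> nat \<Rightarrow> bool list \<Rightarrow> bool list option pmf" where
  "ch1_row pc pe ps l x = embed_pmf (\<lambda>y. case y of
       None \<Rightarrow> pe
     | Some e \<Rightarrow> (if e = x then pc
                  else if length e = l then ps / (2 ^ l - 1) else 0))"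

definition ch1 :: "real \<Rightarrow> real \<Rightarrow> real \<Rightarrow> nat \<Rightarrow> bool list list \<Rightarrow> bool list option list pmf" where
  "ch1 pc pe ps l X = foldr (\<lambda>x M. bind_pmf (ch1_row pc pe ps l x) (\<lambda>y. map_pmf (Cons y) M))
                          X (return_pmf [])"

definition ch2 :: "'a list \<Rightarrow> 'a list pmf" where
  "ch2 Y = map_pmf (\<lambda>\<sigma>. map (\<lambda>i. Y ! \<sigma> i) [0..<length Y])
                   (pmf_of_set {\<sigma>. \<sigma> permutes {..<length Y}})"

definition outer_channel :: "real \<Rightarrow> real \<Rightarrow> real \<Rightarrow> nat \<Rightarrow> bool list list \<Rightarrow> bool list option list pmf" where
  "outer_channel pc pe ps l X = bind_pmf (ch1 pc pe ps l X) ch2"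

definition is_code :: "nat \<Rightarrow> nat \<Rightarrow> nat \<Rightarrow> nat \<Rightarrow> (bool list list \<Rightarrow> bool list list) \<Rightarrow> bool" where
  "is_code n l k w enc \<longleftrightarrow>
     (\<forall>U. is_matrix k w U \<longrightarrow> is_matrix n l (enc U)) \<and> inj_on enc {U. is_matrix k w U}"

definition error_prob :: "real \<Rightarrow> real \<Rightarrow> real \<Rightarrow> nat \<Rightarrow> nat \<Rightarrow> nat \<Rightarrow>
     (bool list list \<Rightarrow> bool list list) \<Rightarrow> (bool list option list \<Rightarrow> bool list list) \<Rightarrow> real" where
  "error_prob pc pe ps l k w enc dec =
     measure_pmf.prob
       (bind_pmf (pmf_of_set {U. is_matrix k w U})
          (\<lambda>U. map_pmf (\<lambda>Z. dec Z \<noteq> U) (outer_channel pc pe ps l (enc U))))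
       {True}"

end

theory Submission
  imports Defs "HOL-Probability.Hoeffding"
begin

text \<open>Random coding with a typicality decoder. The codewords are drawn independently and
  uniformly, and \<open>Z\<close> is decoded to the unique message whose codeword has at least
  \<open>T = \<lceil>(pc - \<epsilon>) n\<rceil>\<close> of its rows among the rows of \<open>Z\<close>. The sent codeword passes this test
  except with probability \<open>exp (-2 n \<epsilon>\<^sup>2)\<close> by Hoeffding's inequality. Any other codeword is
  independent of \<open>Z\<close>, so it passes with probability at most \<open>(n choose T) (n / 2\<^sup>l)\<^sup>T\<close>, and a
  union bound over the \<open>2\<^sup>k\<^sup>w\<close> messages leaves \<open>2\<^sup>-\<^sup>n\<close> as soon as \<open>\<epsilon> w \<ge> 2\<close>, which holds
  eventually because \<open>w = (\<beta> - 1) log n\<close> grows. Collisions of codewords are just as rare and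
  are repaired by reassigning the colliding messages; finally some codebook does at least as
  well as the average one.\<close>

section \<open>Finite probability\<close>

lemma measure_pmf_prob_bind_pmf:
  "measure_pmf.prob (bind_pmf M f) A = measure_pmf.expectation M (\<lambda>x. measure_pmf.prob (f x) A)"
proof -
  have "emeasure (measure_pmf (bind_pmf M f)) A = (\<integral>\<^sup>+x. ennreal (measure_pmf.prob (f x) A) \<partial>M)"
    unfolding emeasure_bind_pmf by (simp add: measure_pmf.emeasure_eq_measure)
  also have "\<dots> = ennreal (measure_pmf.expectation M (\<lambda>x. measure_pmf.prob (f x) A))"
    by (intro nn_integral_eq_integral measure_pmf.integrable_const_bound[where B=1]) auto
  finally show ?thesis
    by (simp add: measure_pmf.emeasure_eq_measure integral_nonneg_AE)
qed

lemma integral_le_const_pmf: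
  fixes g :: "'a \<Rightarrow> real"
  assumes "integrable (measure_pmf p) g" and "\<And>x. x \<in> set_pmf p \<Longrightarrow> g x \<le> c"
  shows "measure_pmf.expectation p g \<le> c"
proof -
  have "measure_pmf.expectation p g \<le> measure_pmf.expectation p (\<lambda>_. c)"
    by (intro integral_mono_AE assms(1)) (auto intro!: AE_pmfI assms(2))
  then show ?thesis by simp
qed

lemma measure_pmf_prob_bind_pmf_le:
  assumes "\<And>y z. y \<in> set_pmf p \<Longrightarrow> z \<in> set_pmf (f y) \<Longrightarrow> z \<in> E \<Longrightarrow> y \<in> F"
  shows "measure_pmf.prob (bind_pmf p f) E \<le> measure_pmf.prob p F"
proof -
  have "measure_pmf.prob (f y) E \<le> indicator F y" if "y \<in> set_pmf p" for y
  proof (cases "y \<in> F")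
    case False
    then have "measure_pmf.prob (f y) E = 0"
      using assms[OF that] by (subst measure_pmf_zero_iff) auto
    then show ?thesis by simp
  qed simp
  then have "measure_pmf.expectation p (\<lambda>y. measure_pmf.prob (f y) E) \<le> measure_pmf.expectation p (indicator F)"
    by (intro integral_mono_AE AE_pmfI measure_pmf.integrable_const_bound[where B=1])
       (auto simp: indicator_def)
  then show ?thesis by (simp add: measure_pmf_prob_bind_pmf)
qed

lemma expectation_pair_pmf:
  fixes h :: "'a \<times> 'b \<Rightarrow> real"
  assumes h0: "\<And>x. 0 \<le> h x" and hc: "\<And>x. h x \<le> c"
  shows "measure_pmf.expectation (pair_pmf A B) h =
         measure_pmf.expectation A (\<lambda>a. measure_pmf.expectation B (\<lambda>b. h (a, b)))"
proof -
  have int: "integrable (measure_pmf p) g" if "\<And>x. 0 \<le> g x" "\<And>x. g x \<le> c"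
    for p and g :: "'c \<Rightarrow> real"
    using that by (intro measure_pmf.integrable_const_bound[where B=c]) auto
  have inner: "0 \<le> measure_pmf.expectation B (\<lambda>b. h (a, b))"
    "measure_pmf.expectation B (\<lambda>b. h (a, b)) \<le> c" for a
    using h0 hc by (auto intro!: integral_nonneg_AE integral_le_const_pmf int)
  have "ennreal (measure_pmf.expectation (pair_pmf A B) h) = (\<integral>\<^sup>+x. ennreal (h x) \<partial>pair_pmf A B)"
    using h0 hc by (intro nn_integral_eq_integral[symmetric] int) auto
  also have "\<dots> = (\<integral>\<^sup>+a. \<integral>\<^sup>+b. ennreal (h (a, b)) \<partial>B \<partial>A)"
    by (rule nn_integral_pair_pmf')
  also have "\<dots> = (\<integral>\<^sup>+a. ennreal (measure_pmf.expectation B (\<lambda>b. h (a, b))) \<partial>A)"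
    using h0 hc by (intro nn_integral_cong nn_integral_eq_integral int) auto
  also have "\<dots> = ennreal (measure_pmf.expectation A (\<lambda>a. measure_pmf.expectation B (\<lambda>b. h (a, b))))"
    using inner by (intro nn_integral_eq_integral int) auto
  finally show ?thesis
    using inner by (subst (asm) ennreal_inj) (auto intro!: integral_nonneg_AE h0)
qed

lemma expectation_prob_commute:
  "measure_pmf.expectation A (\<lambda>a. measure_pmf.prob B {b. P a b}) =
   measure_pmf.expectation B (\<lambda>b. measure_pmf.prob A {a. P a b})"
proof -
  have prob_pair: "measure_pmf.prob (pair_pmf A B) E =
      measure_pmf.expectation A (\<lambda>a. measure_pmf.prob B {b. (a, b) \<in> E})"
    for A :: "'c pmf" and B :: "'d pmf" and E
    by (simp add: pair_pmf_def map_pmf_def[symmetric] measure_pmf_prob_bind_pmf vimage_def)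
  have "measure_pmf.expectation A (\<lambda>a. measure_pmf.prob B {b. P a b}) =
        measure_pmf.prob (pair_pmf A B) {(a, b). P a b}"
    by (simp add: prob_pair)
  also have "\<dots> = measure_pmf.prob (pair_pmf B A) {(b, a). P a b}"
    by (subst pair_commute_pmf) (simp add: vimage_def case_prod_unfold)
  also have "\<dots> = measure_pmf.expectation B (\<lambda>b. measure_pmf.prob A {a. P a b})"
    by (simp add: prob_pair)
  finally show ?thesis .
qed

lemma exists_le_expectation:
  fixes g :: "'a \<Rightarrow> real"
  assumes "integrable (measure_pmf p) g"
  shows "\<exists>x\<in>set_pmf p. g x \<le> measure_pmf.expectation p g"
proof (rule ccontr)
  assume "\<not> ?thesis"
  then have "AE x in measure_pmf p. measure_pmf.expectation p g < g x"
    by (auto intro!: AE_pmfI)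
  then have "measure_pmf.expectation p (\<lambda>_. measure_pmf.expectation p g) < measure_pmf.expectation p g"
    using assms by (intro measure_pmf.integral_less_AE_space) auto
  then show False by simp
qed

lemma map_pmf_Pi_pmf_pair:
  assumes "finite A" "a \<in> A" "b \<in> A" "a \<noteq> b"
  shows "map_pmf (\<lambda>f. (f a, f b)) (Pi_pmf A dflt p) = pair_pmf (p a) (p b)"
proof -
  have "Pi_pmf {a, b} dflt p = map_pmf (\<lambda>f x. if x \<in> {a, b} then f x else dflt) (Pi_pmf A dflt p)"
    using assms by (intro Pi_pmf_subset) auto
  then have "map_pmf (\<lambda>f. (f a, f b)) (Pi_pmf A dflt p) = map_pmf (\<lambda>f. (f a, f b)) (Pi_pmf {a, b} dflt p)"
    by (simp add: pmf.map_comp o_def)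
  also have "\<dots> = pair_pmf (p a) (p b)"
    using assms(4)
    by (simp add: Pi_pmf_insert Pi_pmf_singleton pmf.map_comp o_def pair_map_pmf2 case_prod_unfold)
  finally show ?thesis .
qed

section \<open>Matrices and the outer channel\<close>

lemma finite_bool_lists_length [simp]: "finite {r :: bool list. length r = l}"
  using finite_lists_length_eq[of "UNIV :: bool set" l] by simp

lemma card_bool_lists_length: "card {r :: bool list. length r = l} = 2 ^ l"
  using card_lists_length_eq[of "UNIV :: bool set" l] by simp

lemma matrices_eq: "{U. is_matrix k w U} = {U. set U \<subseteq> {r. length r = w} \<and> length U = k}"
  by (auto simp: is_matrix_def)

lemma finite_matrices [simp]: "finite {U. is_matrix k w U}"
  unfolding matrices_eq by (rule finite_lists_length_eq) simp

lemma card_matrices: "card {U. is_matrix k w U} = 2 ^ (k * w)"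
  unfolding matrices_eq
  by (simp add: card_lists_length_eq card_bool_lists_length power_mult[symmetric] mult.commute)

lemma matrices_nonempty [simp]: "{U. is_matrix k w U} \<noteq> {}"
proof -
  have "is_matrix k w (replicate k (replicate w True))" by (simp add: is_matrix_def)
  then show ?thesis by blast
qed

lemma error_prob_eq_average:
  "error_prob pc pe ps l k w enc dec =
   (\<Sum>U\<in>{U. is_matrix k w U}. measure_pmf.prob (outer_channel pc pe ps l (enc U)) {Z. dec Z \<noteq> U})
     / card {U. is_matrix k w U}"
  unfolding error_prob_def measure_pmf_prob_bind_pmf
  using finite_matrices matrices_nonempty by (simp add: integral_pmf_of_set vimage_def)

lemma ch1_Nil [simp]: "ch1 pc pe ps l [] = return_pmf []"
  by (simp add: ch1_def)

lemma ch1_Cons: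
  "ch1 pc pe ps l (x # X) = bind_pmf (ch1_row pc pe ps l x) (\<lambda>y. map_pmf (Cons y) (ch1 pc pe ps l X))"
  by (simp add: ch1_def)

lemma length_set_pmf_ch1: "Y \<in> set_pmf (ch1 pc pe ps l X) \<Longrightarrow> length Y = length X"
  by (induction X arbitrary: Y) (auto simp: ch1_Cons)

lemma set_pmf_ch2:
  assumes "Z \<in> set_pmf (ch2 Y)"
  shows "set Z = set Y" and "length Z = length Y"
proof -
  have "finite {\<sigma>. \<sigma> permutes {..<length Y}}" by (rule finite_permutations) simp
  moreover have "{\<sigma>. \<sigma> permutes {..<length Y}} \<noteq> {}" using permutes_id by blast
  ultimately obtain \<sigma> where \<sigma>: "\<sigma> permutes {..<length Y}" and Z: "Z = map (\<lambda>i. Y ! \<sigma> i) [0..<length Y]"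
    using assms unfolding ch2_def by auto
  show "length Z = length Y" using Z by simp
  have "set Z = (\<lambda>i. Y ! i) ` (\<sigma> ` {..<length Y})" using Z by (auto simp: image_image atLeast0LessThan)
  also have "\<sigma> ` {..<length Y} = {..<length Y}" by (rule permutes_image[OF \<sigma>])
  finally show "set Z = set Y" by (auto simp: in_set_conv_nth)
qed

lemma length_set_pmf_outer_channel:
  "Z \<in> set_pmf (outer_channel pc pe ps l X) \<Longrightarrow> length Z = length X"
  by (auto simp: outer_channel_def length_set_pmf_ch1 set_pmf_ch2(2))

fun count_correct :: "bool list list \<Rightarrow> bool list option list \<Rightarrow> nat" where
  "count_correct (x # X) (y # Y) = (if y = Some x then 1 else 0) + count_correct X Y"
| "count_correct _ _ = 0"

definition rows_received :: "bool list list \<Rightarrow> bool list option list \<Rightarrow> nat" where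
  "rows_received X Z = length (filter (\<lambda>r. Some r \<in> set Z) X)"

lemma count_correct_le_rows_received:
  "length Y = length X \<Longrightarrow> count_correct X Y \<le> rows_received X Y"
proof (induction Y X rule: list_induct2)
  case (Cons y Y x X)
  have "length (filter (\<lambda>r. Some r \<in> set Y) X) \<le> length (filter (\<lambda>r. Some r \<in> set (y # Y)) X)"
    by (induction X) auto
  then show ?case using Cons.IH by (auto simp: rows_received_def)
qed (simp add: rows_received_def)

locale channel =
  fixes pc pe ps :: real and l :: nat
  assumes pc_nonneg: "pc \<ge> 0" and pe_nonneg: "pe \<ge> 0" and ps_nonneg: "ps \<ge> 0"
    and probs_sum: "pc + pe + ps = 1" and l_pos: "l \<ge> 1"
begin

lemma pc_le_1: "pc \<le> 1"
  using probs_sum pe_nonneg ps_nonneg by linarith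

definition row_density :: "bool list \<Rightarrow> bool list option \<Rightarrow> real" where
  "row_density x y = (case y of
       None \<Rightarrow> pe
     | Some e \<Rightarrow> (if e = x then pc else if length e = l then ps / (2 ^ l - 1) else 0))"

lemma row_density_nonneg: "0 \<le> row_density x y"
  using pc_nonneg pe_nonneg ps_nonneg by (auto simp: row_density_def split: option.splits)

lemma row_density_sum:
  assumes x: "length x = l"
  shows "(\<integral>\<^sup>+y. ennreal (row_density x y) \<partial>count_space UNIV) = 1"
proof -
  define R where "R = {r :: bool list. length r = l}"
  define A where "A = insert None (Some ` R)"
  have x_R: "x \<in> R" using x by (simp add: R_def)
  have "(\<integral>\<^sup>+y. ennreal (row_density x y) \<partial>count_space UNIV) =
        (\<integral>\<^sup>+y. ennreal (row_density x y) \<partial>count_space A)"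
    by (rule nn_integral_count_space_eq[symmetric])
       (auto simp: A_def R_def row_density_def x split: option.splits)
  also have "\<dots> = ennreal (\<Sum>y\<in>A. row_density x y)"
    by (simp add: A_def R_def nn_integral_count_space_finite sum_ennreal row_density_nonneg)
  also have "(\<Sum>y\<in>A. row_density x y) = pe + (pc + (\<Sum>e\<in>R - {x}. ps / (2 ^ l - 1)))"
  proof -
    have "(\<Sum>y\<in>A. row_density x y) = pe + (\<Sum>e\<in>R. row_density x (Some e))"
      by (simp add: A_def R_def sum.reindex row_density_def)
    also have "(\<Sum>e\<in>R. row_density x (Some e)) = pc + (\<Sum>e\<in>R - {x}. row_density x (Some e))"
      using x_R by (simp add: R_def sum.remove row_density_def)
    also have "(\<Sum>e\<in>R - {x}. row_density x (Some e)) = (\<Sum>e\<in>R - {x}. ps / (2 ^ l - 1))"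
      by (rule sum.cong) (auto simp: R_def row_density_def)
    finally show ?thesis .
  qed
  also have "(\<Sum>e\<in>R - {x}. ps / (2 ^ l - 1)) = ps"
  proof -
    have "(2::real) ^ l \<ge> 2 ^ 1" using l_pos by (intro power_increasing) auto
    moreover have "card (R - {x}) = 2 ^ l - 1"
      using x_R by (simp add: R_def card_Diff_singleton card_bool_lists_length)
    ultimately show ?thesis by (simp add: of_nat_diff)
  qed
  finally show ?thesis using probs_sum by (simp add: add_ac)
qed

lemma pmf_ch1_row:
  assumes "length x = l"
  shows "pmf (ch1_row pc pe ps l x) y = row_density x y"
  unfolding ch1_row_def row_density_def[symmetric, abs_def]
  using pmf_embed_pmf[OF row_density_nonneg row_density_sum[OF assms]] by simp

lemma ch1_row_correct_bernoulli:
  assumes "length x = l"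
  shows "map_pmf (\<lambda>y. y = Some x) (ch1_row pc pe ps l x) = bernoulli_pmf pc"
proof -
  have "pmf (map_pmf (\<lambda>y. y = Some x) (ch1_row pc pe ps l x)) True
      = measure_pmf.prob (ch1_row pc pe ps l x) {Some x}"
    by (subst pmf_map) (auto intro: arg_cong2[where f = measure_pmf.prob])
  also have "\<dots> = pc" by (simp add: measure_pmf_single pmf_ch1_row[OF assms] row_density_def)
  finally have "pmf (map_pmf (\<lambda>y. y = Some x) (ch1_row pc pe ps l x)) True = pc" .
  then show ?thesis
    using pc_nonneg pc_le_1 by (intro pmf_eqI) (metis (full_types) pmf_False_conv_True pmf_bernoulli_False pmf_bernoulli_True)
qed

lemma count_correct_binomial:
  assumes "\<forall>x\<in>set X. length x = l"
  shows "map_pmf (count_correct X) (ch1 pc pe ps l X) = binomial_pmf (length X) pc"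
  using assms
proof (induction X)
  case Nil
  show ?case using pc_nonneg pc_le_1 by (simp add: binomial_pmf_0)
next
  case (Cons x X)
  have "map_pmf (count_correct (x # X)) (ch1 pc pe ps l (x # X)) =
        bind_pmf (map_pmf (\<lambda>y. y = Some x) (ch1_row pc pe ps l x))
          (\<lambda>b. map_pmf (\<lambda>k. (if b then 1 else 0) + k) (map_pmf (count_correct X) (ch1 pc pe ps l X)))"
    by (simp add: ch1_Cons map_bind_pmf bind_map_pmf pmf.map_comp o_def)
  also have "\<dots> = binomial_pmf (length (x # X)) pc"
    using Cons pc_nonneg pc_le_1 ch1_row_correct_bernoulli[of x]
    by (simp add: binomial_pmf_Suc) (simp add: map_pmf_def)
  finally show ?case .
qed

text \<open>Permuting the rows does not change which rows of \<open>X\<close> are received, so the number of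
  received rows dominates the binomially distributed number of rows that channel-1 left intact.\<close>

lemma rows_received_tail:
  fixes \<epsilon> :: real
  assumes X: "\<forall>x\<in>set X. length x = l" and n: "length X = n" "n > 0" and \<epsilon>: "\<epsilon> \<ge> 0"
  shows "measure_pmf.prob (outer_channel pc pe ps l X) {Z. real (rows_received X Z) < (pc - \<epsilon>) * n}
         \<le> exp (-2 * real n * \<epsilon>^2)"
proof -
  have "measure_pmf.prob (outer_channel pc pe ps l X) {Z. real (rows_received X Z) < (pc - \<epsilon>) * n}
      \<le> measure_pmf.prob (ch1 pc pe ps l X) {Y. real (count_correct X Y) < (pc - \<epsilon>) * n}"
    unfolding outer_channel_def
  proof (rule measure_pmf_prob_bind_pmf_le)
    fix Y Z assume Y: "Y \<in> set_pmf (ch1 pc pe ps l X)" and Z: "Z \<in> set_pmf (ch2 Y)"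
    have "rows_received X Z = rows_received X Y" using set_pmf_ch2[OF Z] by (simp add: rows_received_def)
    moreover have "count_correct X Y \<le> rows_received X Y"
      using length_set_pmf_ch1[OF Y] by (rule count_correct_le_rows_received)
    ultimately show "Z \<in> {Z. real (rows_received X Z) < (pc - \<epsilon>) * n} \<Longrightarrow>
        Y \<in> {Y. real (count_correct X Y) < (pc - \<epsilon>) * n}" by auto
  qed
  also have "\<dots> = measure_pmf.prob (binomial_pmf n pc) {m. real m < (pc - \<epsilon>) * n}"
    using count_correct_binomial[OF X, symmetric] n by simp
  also have "\<dots> \<le> measure_pmf.prob (binomial_pmf n pc) {m. real m / n \<le> pc - \<epsilon>}"
    using n by (intro measure_pmf.finite_measure_mono) (auto simp: field_simps)
  also have "\<dots> \<le> exp (-2 * real n * \<epsilon>^2)"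
    using binomial_distribution.prob_le'[of pc n \<epsilon>] pc_nonneg pc_le_1 n \<epsilon>
    by (simp add: binomial_distribution_def)
  finally show ?thesis .
qed

end

section \<open>Random codebooks\<close>

lemma inj_on_repair_collisions:
  assumes "finite A" "finite B" "card A \<le> card B" "f ` A \<subseteq> B"
  shows "\<exists>g. inj_on g A \<and> g ` A \<subseteq> B \<and> (\<forall>x\<in>A. (\<forall>y\<in>A - {x}. f y \<noteq> f x) \<longrightarrow> g x = f x)"
proof -
  define C where "C = {x\<in>A. \<exists>y\<in>A - {x}. f y = f x}"
  have inj: "inj_on f (A - C)" by (auto simp: inj_on_def C_def)
  have "card (A - C) + card C = card A"
    using assms(1) by (simp add: C_def card_Diff_subset card_mono)
  moreover have "card (f ` (A - C)) = card (A - C)" by (rule card_image[OF inj])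
  moreover have "card (B - f ` (A - C)) = card B - card (f ` (A - C))"
    using assms(4) by (intro card_Diff_subset) (auto intro: finite_subset[OF _ assms(2)])
  ultimately have "card C \<le> card (B - f ` (A - C))" using assms(3) by linarith
  moreover have "finite C" using assms(1) by (simp add: C_def)
  ultimately obtain h where h: "h ` C \<subseteq> B - f ` (A - C)" "inj_on h C"
    using card_le_inj assms(2) by blast
  define g where "g x = (if x \<in> C then h x else f x)" for x
  have "inj_on g A"
    using inj h by (auto simp: inj_on_def g_def split: if_splits)
  moreover have "g ` A \<subseteq> B" using h assms(4) by (auto simp: g_def)
  moreover have "\<forall>x\<in>A. (\<forall>y\<in>A - {x}. f y \<noteq> f x) \<longrightarrow> g x = f x" by (auto simp: g_def C_def)
  ultimately show ?thesis by blast
qed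

lemma prob_replicate_pmf_count_ge:
  "measure_pmf.prob (replicate_pmf n p) {xs. t \<le> length (filter (\<lambda>x. x \<in> S) xs)}
     \<le> real (n choose t) * measure_pmf.prob p S ^ t"
proof (induction n arbitrary: t)
  case 0
  then show ?case by (cases t) (auto simp: measure_pmf_single)
next
  case (Suc n)
  define q where "q = measure_pmf.prob p S"
  show ?case
  proof (cases t)
    case 0
    then show ?thesis by simp
  next
    case (Suc t')
    define a where "a = real (n choose t') * q ^ t'"
    define b where "b = real (n choose t) * q ^ t"
    define g where "g x = measure_pmf.prob (replicate_pmf n p)
                            {xs. t \<le> length (filter (\<lambda>x. x \<in> S) (x # xs))}" for x
    have prob_eq: "measure_pmf.prob (replicate_pmf (Suc n) p) {xs. t \<le> length (filter (\<lambda>x. x \<in> S) xs)}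
        = measure_pmf.expectation p g"
      unfolding g_def replicate_pmf.simps map_pmf_def[symmetric] measure_pmf_prob_bind_pmf
      by (simp add: vimage_def)
    have g_le: "g x \<le> a * indicator S x + b" for x
      using Suc.IH[of t'] Suc.IH[of t] \<open>t = Suc t'\<close>
      by (auto simp: g_def a_def b_def q_def indicator_def add_increasing2)
    have "measure_pmf.expectation p g \<le> measure_pmf.expectation p (\<lambda>x. a * indicator S x + b)"
      using g_le by (intro integral_mono measure_pmf.integrable_const_bound[where B=1]
          measure_pmf.integrable_const_bound[where B="\<bar>a\<bar> + \<bar>b\<bar>"])
         (auto simp: g_def indicator_def)
    also have "\<dots> = q * a + b"
    proof -
      have "integrable (measure_pmf p) (\<lambda>x. a * indicator S x :: real)"
        by (intro measure_pmf.integrable_const_bound[where B="\<bar>a\<bar>"]) (auto simp: indicator_def)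
      then show ?thesis by (simp add: q_def mult.commute)
    qed
    also have "q * a + b = real (Suc n choose t) * q ^ t"
      by (simp add: a_def b_def \<open>t = Suc t'\<close> algebra_simps)
    finally show ?thesis using prob_eq by (simp add: q_def)
  qed
qed

locale random_coding = channel +
  fixes n k w :: nat and \<epsilon> :: real
  assumes n_pos: "n > 0" and message_bits_le: "k * w \<le> n * l" and \<epsilon>_nonneg: "\<epsilon> \<ge> 0"
begin

abbreviation messages :: "bool list list set" where
  "messages \<equiv> {U. is_matrix k w U}"

abbreviation transmit :: "bool list list \<Rightarrow> bool list option list pmf" where
  "transmit X \<equiv> outer_channel pc pe ps l X"

definition random_matrix :: "bool list list pmf" where
  "random_matrix = replicate_pmf n (pmf_of_set {r. length r = l})"

definition threshold :: nat where
  "threshold = nat \<lceil>(pc - \<epsilon>) * n\<rceil>"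

definition typical :: "bool list list \<Rightarrow> bool list option list \<Rightarrow> bool" where
  "typical X Z \<longleftrightarrow> threshold \<le> rows_received X Z"

definition typical_decoder :: "(bool list list \<Rightarrow> bool list list) \<Rightarrow> bool list option list \<Rightarrow> bool list list" where
  "typical_decoder f Z =
     (SOME U. U \<in> messages \<and> typical (f U) Z \<and> (\<forall>U'\<in>messages. typical (f U') Z \<longrightarrow> U' = U))"

definition cross_bound :: real where
  "cross_bound = real (n choose threshold) * (real n / 2 ^ l) ^ threshold"

lemma threshold_le_n: "threshold \<le> n"
proof -
  have "(pc - \<epsilon>) * real n \<le> 1 * real n" using pc_le_1 \<epsilon>_nonneg by (intro mult_right_mono) auto
  then show ?thesis by (simp add: threshold_def nat_le_iff ceiling_le_iff)
qed

lemma set_pmf_random_matrix: "set_pmf random_matrix = {X. is_matrix n l X}"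
proof -
  have "{r :: bool list. length r = l} \<noteq> {}" by (auto intro: exI[of _ "replicate l True"])
  then show ?thesis
    by (auto simp: random_matrix_def set_replicate_pmf is_matrix_def)
qed

lemma prob_random_matrix_rows_in:
  assumes "finite S" and "card S \<le> n"
  shows "measure_pmf.prob random_matrix {X. threshold \<le> length (filter (\<lambda>r. r \<in> S) X)} \<le> cross_bound"
proof -
  have "measure_pmf.prob (pmf_of_set {r :: bool list. length r = l}) S
      = card ({r. length r = l} \<inter> S) / 2 ^ l"
    by (subst measure_pmf_of_set) (auto intro: exI[of _ "replicate l True"] simp: card_bool_lists_length)
  also have "\<dots> \<le> real n / 2 ^ l"
    using card_mono[OF assms(1) Int_lower2[of "{r. length r = l}" S]] assms(2)
    by (intro divide_right_mono) auto
  finally have "measure_pmf.prob (pmf_of_set {r :: bool list. length r = l}) S ^ threshold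
      \<le> (real n / 2 ^ l) ^ threshold" by (intro power_mono) auto
  then show ?thesis
    using prob_replicate_pmf_count_ge[of n "pmf_of_set {r. length r = l}" threshold S]
    unfolding random_matrix_def cross_bound_def
    by (meson mult_left_mono of_nat_0_le_iff order_trans)
qed

lemma prob_typical_random_matrix:
  assumes "length Z = n"
  shows "measure_pmf.prob random_matrix {X. typical X Z} \<le> cross_bound"
proof -
  define S where "S = Some -` set Z"
  have "finite S" unfolding S_def by (rule finite_vimageI) auto
  moreover have "card S \<le> n"
    using card_inj_on_le[of Some S "set Z"] card_length[of Z] assms by (auto simp: S_def)
  moreover have "{X. typical X Z} = {X. threshold \<le> length (filter (\<lambda>r. r \<in> S) X)}"
    by (simp add: typical_def rows_received_def S_def)
  ultimately show ?thesis using prob_random_matrix_rows_in by simp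
qed

lemma prob_random_matrix_eq:
  assumes "length X = n"
  shows "measure_pmf.prob random_matrix {X} \<le> cross_bound"
proof -
  have "{X} \<subseteq> {X'. threshold \<le> length (filter (\<lambda>r. r \<in> set X) X')}"
    using assms threshold_le_n by (simp add: filter_True)
  then have "measure_pmf.prob random_matrix {X}
      \<le> measure_pmf.prob random_matrix {X'. threshold \<le> length (filter (\<lambda>r. r \<in> set X) X')}"
    by (rule measure_pmf.finite_measure_mono) simp
  also have "\<dots> \<le> cross_bound"
    using card_length[of X] assms by (intro prob_random_matrix_rows_in) auto
  finally show ?thesis .
qed

lemma prob_not_typical:
  assumes "is_matrix n l X"
  shows "measure_pmf.prob (transmit X) {Z. \<not> typical X Z} \<le> exp (-2 * real n * \<epsilon>^2)"
proof -
  have "{Z. \<not> typical X Z} = {Z. real (rows_received X Z) < (pc - \<epsilon>) * n}"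
    by (auto simp: typical_def threshold_def not_le nat_less_iff less_ceiling_iff)
  then show ?thesis
    using assms n_pos \<epsilon>_nonneg rows_received_tail[of X n \<epsilon>] by (simp add: is_matrix_def)
qed

lemma decoding_error_le:
  assumes "U \<in> messages"
  shows "measure_pmf.prob (transmit X) {Z. typical_decoder f Z \<noteq> U}
     \<le> measure_pmf.prob (transmit X) {Z. \<not> typical (f U) Z}
       + (\<Sum>U'\<in>messages - {U}. measure_pmf.prob (transmit X) {Z. typical (f U') Z})"
proof -
  have "{Z. typical_decoder f Z \<noteq> U}
      \<subseteq> {Z. \<not> typical (f U) Z} \<union> (\<Union>U'\<in>messages - {U}. {Z. typical (f U') Z})"
  proof (rule subsetI, rule ccontr)
    fix Z assume Z: "Z \<in> {Z. typical_decoder f Z \<noteq> U}"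
      and "Z \<notin> {Z. \<not> typical (f U) Z} \<union> (\<Union>U'\<in>messages - {U}. {Z. typical (f U') Z})"
    then have "typical (f U) Z" and "\<forall>U'\<in>messages. typical (f U') Z \<longrightarrow> U' = U" by auto
    then have "typical_decoder f Z = U"
      unfolding typical_decoder_def using assms by (intro some_equality) blast+
    then show False using Z by simp
  qed
  then have "measure_pmf.prob (transmit X) {Z. typical_decoder f Z \<noteq> U}
      \<le> measure_pmf.prob (transmit X)
           ({Z. \<not> typical (f U) Z} \<union> (\<Union>U'\<in>messages - {U}. {Z. typical (f U') Z}))"
    by (rule measure_pmf.finite_measure_mono) simp
  also have "\<dots> \<le> measure_pmf.prob (transmit X) {Z. \<not> typical (f U) Z}
        + measure_pmf.prob (transmit X) (\<Union>U'\<in>messages - {U}. {Z. typical (f U') Z})"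
    by (rule measure_Un_le) auto
  also have "measure_pmf.prob (transmit X) (\<Union>U'\<in>messages - {U}. {Z. typical (f U') Z})
      \<le> (\<Sum>U'\<in>messages - {U}. measure_pmf.prob (transmit X) {Z. typical (f U') Z})"
    by (rule measure_pmf.finite_measure_subadditive_finite) auto
  finally show ?thesis by simp
qed

definition missed :: "bool list list \<Rightarrow> real" where
  "missed X = measure_pmf.prob (transmit X) {Z. \<not> typical X Z}"

text \<open>The indicator charges a collision of two codewords; the encoder built from the codebook
  has to repair collisions, which is only affordable if they are rare.\<close>

definition confusion :: "bool list list \<Rightarrow> bool list list \<Rightarrow> real" where
  "confusion X X' = measure_pmf.prob (transmit X) {Z. typical X' Z} + indicator {X} X'"

lemma confusion_nonneg: "0 \<le> confusion X X'"
  by (simp add: confusion_def)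

lemma confusion_le_2: "confusion X X' \<le> 2"
  by (auto simp: confusion_def indicator_def intro: order_trans[OF measure_pmf.prob_le_1])

lemma integrable_missed [simp]: "integrable (measure_pmf p) (\<lambda>x. missed (g x))"
  by (intro measure_pmf.integrable_const_bound[where B=1]) (auto simp: missed_def)

lemma integrable_confusion [simp]: "integrable (measure_pmf p) (\<lambda>x. confusion (g x) (h x))"
  using confusion_nonneg confusion_le_2 by (intro measure_pmf.integrable_const_bound[where B=2]) auto

lemma expectation_confusion:
  assumes "length X = n"
  shows "measure_pmf.expectation random_matrix (confusion X) \<le> 2 * cross_bound"
proof -
  have "measure_pmf.expectation random_matrix (\<lambda>X'. measure_pmf.prob (transmit X) {Z. typical X' Z})
      = measure_pmf.expectation (transmit X) (\<lambda>Z. measure_pmf.prob random_matrix {X'. typical X' Z})"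
    by (rule expectation_prob_commute)
  also have "\<dots> \<le> cross_bound"
    using assms
    by (intro integral_le_const_pmf prob_typical_random_matrix measure_pmf.integrable_const_bound[where B=1])
       (auto simp: length_set_pmf_outer_channel)
  finally have "measure_pmf.expectation random_matrix (\<lambda>X'. measure_pmf.prob (transmit X) {Z. typical X' Z})
      + measure_pmf.prob random_matrix {X} \<le> 2 * cross_bound"
    using prob_random_matrix_eq[OF assms] by linarith
  moreover have "measure_pmf.expectation random_matrix (confusion X)
      = measure_pmf.expectation random_matrix (\<lambda>X'. measure_pmf.prob (transmit X) {Z. typical X' Z})
        + measure_pmf.prob random_matrix {X}"
    unfolding confusion_def
    by (subst Bochner_Integration.integral_add)
       (auto intro: measure_pmf.integrable_const_bound[where B=1] simp: indicator_def)
  ultimately show ?thesis by simp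
qed

definition random_codebook :: "(bool list list \<Rightarrow> bool list list) pmf" where
  "random_codebook = Pi_pmf messages [] (\<lambda>_. random_matrix)"

lemma codeword_random_codebook:
  assumes "f \<in> set_pmf random_codebook" and "U \<in> messages"
  shows "is_matrix n l (f U)"
  using assms by (simp add: random_codebook_def set_Pi_pmf PiE_dflt_def set_pmf_random_matrix)

lemma expectation_missed_random_codebook:
  assumes "U \<in> messages"
  shows "measure_pmf.expectation random_codebook (\<lambda>f. missed (f U)) \<le> exp (-2 * real n * \<epsilon>^2)"
proof -
  have "measure_pmf.expectation random_codebook (\<lambda>f. missed (f U))
      = measure_pmf.expectation (map_pmf (\<lambda>f. f U) random_codebook) missed"
    by simp
  also have "map_pmf (\<lambda>f. f U) random_codebook = random_matrix"
    using assms by (simp add: random_codebook_def Pi_pmf_component)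
  also have "measure_pmf.expectation random_matrix missed \<le> exp (-2 * real n * \<epsilon>^2)"
    using prob_not_typical
    by (intro integral_le_const_pmf) (auto simp: missed_def set_pmf_random_matrix)
  finally show ?thesis .
qed

lemma expectation_confusion_random_codebook:
  assumes "U \<in> messages" "U' \<in> messages" "U \<noteq> U'"
  shows "measure_pmf.expectation random_codebook (\<lambda>f. confusion (f U) (f U')) \<le> 2 * cross_bound"
proof -
  have "measure_pmf.expectation random_codebook (\<lambda>f. confusion (f U) (f U'))
      = measure_pmf.expectation (map_pmf (\<lambda>f. (f U, f U')) random_codebook) (case_prod confusion)"
    by simp
  also have "map_pmf (\<lambda>f. (f U, f U')) random_codebook = pair_pmf random_matrix random_matrix"
    using assms by (simp add: random_codebook_def map_pmf_Pi_pmf_pair)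
  also have "measure_pmf.expectation (pair_pmf random_matrix random_matrix) (case_prod confusion)
      = measure_pmf.expectation random_matrix (\<lambda>X. measure_pmf.expectation random_matrix (confusion X))"
    using confusion_nonneg confusion_le_2 by (subst expectation_pair_pmf) auto
  also have "\<dots> \<le> 2 * cross_bound"
  proof (rule integral_le_const_pmf)
    have "0 \<le> measure_pmf.expectation random_matrix (confusion X)"
      "measure_pmf.expectation random_matrix (confusion X) \<le> 2" for X
      by (auto intro!: integral_nonneg_AE integral_le_const_pmf confusion_nonneg confusion_le_2)
    then show "integrable random_matrix (\<lambda>X. measure_pmf.expectation random_matrix (confusion X))"
      by (intro measure_pmf.integrable_const_bound[where B=2]) auto
  qed (use expectation_confusion in \<open>auto simp: set_pmf_random_matrix is_matrix_def\<close>)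
  finally show ?thesis .
qed

definition union_bound :: "(bool list list \<Rightarrow> bool list list) \<Rightarrow> real" where
  "union_bound f = (\<Sum>U\<in>messages. missed (f U) + (\<Sum>U'\<in>messages - {U}. confusion (f U) (f U')))
                     / card messages"

lemma expectation_union_bound:
  "measure_pmf.expectation random_codebook union_bound
     \<le> exp (-2 * real n * \<epsilon>^2) + 2 * real (card messages) * cross_bound"
proof -
  define M where "M = real (card messages)"
  have M_pos: "M > 0"
    unfolding M_def using finite_matrices matrices_nonempty by (metis card_gt_0_iff of_nat_0_less_iff)
  have "measure_pmf.expectation random_codebook union_bound
      = (\<Sum>U\<in>messages. measure_pmf.expectation random_codebook (\<lambda>f. missed (f U))
          + (\<Sum>U'\<in>messages - {U}. measure_pmf.expectation random_codebook (\<lambda>f. confusion (f U) (f U'))))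
        / M"
    unfolding union_bound_def M_def by (simp add: integrable_sum)
  also have "\<dots> \<le> (\<Sum>U\<in>messages. exp (-2 * real n * \<epsilon>^2) + (\<Sum>U'\<in>messages - {U}. 2 * cross_bound)) / M"
    using M_pos
    by (intro divide_right_mono sum_mono add_mono expectation_missed_random_codebook
          expectation_confusion_random_codebook) auto
  also have "\<dots> \<le> (\<Sum>U\<in>messages. exp (-2 * real n * \<epsilon>^2) + M * (2 * cross_bound)) / M"
    using M_pos card_Diff1_le[of messages]
    by (intro divide_right_mono sum_mono add_left_mono)
       (auto simp: M_def cross_bound_def intro!: mult_right_mono)
  also have "\<dots> = exp (-2 * real n * \<epsilon>^2) + 2 * M * cross_bound"
    using M_pos by (simp add: M_def[symmetric] field_simps)
  finally show ?thesis by (simp add: M_def)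
qed

lemma decoding_error_le_union_term:
  assumes U: "U \<in> messages" and X: "(\<forall>U'\<in>messages - {U}. f U' \<noteq> f U) \<Longrightarrow> X = f U"
  shows "measure_pmf.prob (transmit X) {Z. typical_decoder f Z \<noteq> U}
     \<le> missed (f U) + (\<Sum>U'\<in>messages - {U}. confusion (f U) (f U'))"
proof (cases "\<forall>U'\<in>messages - {U}. f U' \<noteq> f U")
  case True
  have "(\<Sum>U'\<in>messages - {U}. measure_pmf.prob (transmit (f U)) {Z. typical (f U') Z})
      \<le> (\<Sum>U'\<in>messages - {U}. confusion (f U) (f U'))"
    by (intro sum_mono) (simp add: confusion_def)
  then show ?thesis
    using decoding_error_le[OF U, of "f U" f] X[OF True] by (simp add: missed_def)
next
  case False
  then obtain U' where U': "U' \<in> messages - {U}" "f U' = f U" by blast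
  have "measure_pmf.prob (transmit X) {Z. typical_decoder f Z \<noteq> U} \<le> 1" by simp
  also have "\<dots> \<le> confusion (f U) (f U')"
    using U' by (simp add: confusion_def)
  also have "\<dots> \<le> (\<Sum>U'\<in>messages - {U}. confusion (f U) (f U'))"
    using U' confusion_nonneg by (intro member_le_sum) auto
  finally show ?thesis
    by (simp add: missed_def add_increasing)
qed

lemma exists_code_error_le_union_bound:
  assumes f: "f \<in> set_pmf random_codebook"
  shows "\<exists>enc. is_code n l k w enc \<and> error_prob pc pe ps l k w enc (typical_decoder f) \<le> union_bound f"
proof -
  have "card messages \<le> card {X. is_matrix n l X}"
    using message_bits_le by (simp add: card_matrices power_increasing)
  moreover have "f ` messages \<subseteq> {X. is_matrix n l X}"
    using codeword_random_codebook[OF f] by auto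
  ultimately obtain enc where enc: "inj_on enc messages" "enc ` messages \<subseteq> {X. is_matrix n l X}"
    "\<And>U. U \<in> messages \<Longrightarrow> (\<forall>U'\<in>messages - {U}. f U' \<noteq> f U) \<Longrightarrow> enc U = f U"
    using inj_on_repair_collisions[of messages "{X. is_matrix n l X}" f] by auto
  have "is_code n l k w enc" using enc(1,2) by (auto simp: is_code_def)
  moreover have "error_prob pc pe ps l k w enc (typical_decoder f) \<le> union_bound f"
    unfolding error_prob_eq_average union_bound_def
    by (intro divide_right_mono sum_mono decoding_error_le_union_term enc(3)) auto
  ultimately show ?thesis by blast
qed

theorem exists_code_error_le:
  "\<exists>enc dec. is_code n l k w enc \<and>
     error_prob pc pe ps l k w enc dec \<le> exp (-2 * real n * \<epsilon>^2) + 2 * 2 ^ (k * w) * cross_bound"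
proof -
  have "integrable random_codebook union_bound"
    unfolding union_bound_def[abs_def] by (simp add: integrable_sum)
  then obtain f where f: "f \<in> set_pmf random_codebook"
    "union_bound f \<le> measure_pmf.expectation random_codebook union_bound"
    using exists_le_expectation by blast
  moreover obtain enc where "is_code n l k w enc"
    "error_prob pc pe ps l k w enc (typical_decoder f) \<le> union_bound f"
    using exists_code_error_le_union_bound[OF f(1)] by blast
  ultimately show ?thesis
    using expectation_union_bound by (auto simp: card_matrices intro!: exI[of _ enc] exI[of _ "typical_decoder f"])
qed

text \<open>Since \<open>n / 2\<^sup>l = 2\<^sup>-\<^sup>w\<close>, the slack \<open>\<epsilon> n\<close> between the threshold \<open>(pc - \<epsilon>) n\<close> and
  \<open>k = (pc - 2\<epsilon>) n\<close> pays for the \<open>2\<^sup>k\<^sup>w\<close> competing messages once \<open>\<epsilon> w \<ge> 2\<close>.\<close>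

lemma messages_cross_bound_le:
  assumes w: "real w = real l - log 2 (real n)" and k: "real k = real n * (pc - 2 * \<epsilon>)"
    and \<epsilon>w: "2 \<le> \<epsilon> * real w"
  shows "2 ^ (k * w) * cross_bound \<le> 2 powr (- real n)"
proof -
  define T where "T = threshold"
  have T_ge: "(pc - \<epsilon>) * n \<le> real T" unfolding T_def threshold_def by linarith
  have "real n / 2 ^ l = 2 powr (- real w)"
    using n_pos by (simp add: w powr_diff powr_realpow)
  then have "(real n / 2 ^ l) ^ T = 2 powr (- real w * real T)"
    by (simp add: powr_power mult.commute)
  also have "\<dots> \<le> 2 powr (- real w * ((pc - \<epsilon>) * n))"
    using T_ge by (intro powr_mono) (auto simp: mult_left_mono)
  finally have power_le: "(real n / 2 ^ l) ^ T \<le> 2 powr (- real w * ((pc - \<epsilon>) * n))" .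
  have binomial_le: "real (n choose T) \<le> 2 powr real n"
    using binomial_le_pow2[of n T] by (simp add: powr_realpow flip: of_nat_le_iff)
  have "(2::real) ^ (k * w) * cross_bound
      \<le> 2 powr (real k * real w) * (2 powr real n * 2 powr (- real w * ((pc - \<epsilon>) * n)))"
    unfolding cross_bound_def T_def[symmetric]
    by (intro mult_mono power_le binomial_le) (auto simp: powr_realpow[symmetric])
  also have "\<dots> = 2 powr (real n * (1 - \<epsilon> * real w))"
    by (simp add: k powr_add[symmetric] algebra_simps)
  also have "\<dots> \<le> 2 powr (real n * (-1))"
    using \<epsilon>w by (intro powr_mono mult_left_mono) auto
  finally show ?thesis by simp
qed

end

section \<open>Long blocks\<close>

lemma exists_code:
  assumes "k * w \<le> n * l"
  shows "\<exists>enc. is_code n l k w enc"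
proof -
  have "card {U. is_matrix k w U} \<le> card {X. is_matrix n l X}"
    using assms by (simp add: card_matrices power_increasing)
  then obtain enc where "enc ` {U. is_matrix k w U} \<subseteq> {X. is_matrix n l X}" "inj_on enc {U. is_matrix k w U}"
    using card_le_inj[OF finite_matrices finite_matrices] by blast
  then show ?thesis by (auto simp: is_code_def)
qed

lemma message_bits_le_code_bits:
  fixes pc \<epsilon> :: real
  assumes "pc \<le> 1" "\<epsilon> \<ge> 0"
    and k: "real k = real n * (pc - 2 * \<epsilon>)" and w: "real w = real l - log 2 (real n)"
  shows "k * w \<le> n * l"
proof -
  have "real k \<le> real n"
    using assms(1,2) by (simp add: k mult_left_le)
  moreover have "log 2 (real n) \<ge> 0" by (cases "n = 0") (auto simp: log_def)
  then have "real w \<le> real l" by (simp add: w)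
  ultimately have "real k * real w \<le> real n * real l" by (intro mult_mono) auto
  then show ?thesis by (simp flip: of_nat_mult)
qed

lemma exists_code_error_le_exp:
  fixes pc pe ps \<beta> \<epsilon> :: real and n l k w :: nat
  assumes channel: "pc \<ge> 0" "pe \<ge> 0" "ps \<ge> 0" "pc + pe + ps = 1"
    and "\<beta> > 1" and "\<epsilon> > 0"
    and l: "real l = \<beta> * log 2 (real n)"
    and k: "real k = real n * (pc - 2 * \<epsilon>)" and w: "real w = real l - log 2 (real n)"
  shows "\<exists>enc dec. is_code n l k w enc \<and> (2 \<le> n \<and> 2 \<le> \<epsilon> * real w \<longrightarrow>
           error_prob pc pe ps l k w enc dec \<le> exp (-2 * real n * \<epsilon>^2) + 2 * 2 powr (- real n))"
proof (cases "2 \<le> n \<and> 2 \<le> \<epsilon> * real w")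
  case True
  have "1 * 1 \<le> \<beta> * log 2 (real n)" using \<open>\<beta> > 1\<close> True by (intro mult_mono) auto
  then have "l \<ge> 1" using l by simp
  then interpret random_coding pc pe ps l n k w \<epsilon>
    using assms True message_bits_le_code_bits[OF _ _ k w] by unfold_locales auto
  obtain enc dec where code: "is_code n l k w enc"
    and "error_prob pc pe ps l k w enc dec \<le> exp (-2 * real n * \<epsilon>^2) + 2 * (2 ^ (k * w) * cross_bound)"
    using exists_code_error_le by (auto simp: mult.assoc)
  then have "error_prob pc pe ps l k w enc dec \<le> exp (-2 * real n * \<epsilon>^2) + 2 * 2 powr (- real n)"
    using messages_cross_bound_le[OF w k] True by linarith
  with code show ?thesis by blast
next
  case False
  have "pc \<le> 1" using channel by linarith
  then obtain enc where "is_code n l k w enc"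
    using exists_code[OF message_bits_le_code_bits[OF _ _ k w]] \<open>\<epsilon> > 0\<close> by auto
  with False show ?thesis by blast
qed

lemma eventually_large_blocks:
  fixes \<beta> \<epsilon> :: real and n l w :: "nat \<Rightarrow> nat"
  assumes n: "filterlim n at_top sequentially" and "\<beta> > 1" and "\<epsilon> > 0"
    and l: "\<And>j. real (l j) = \<beta> * log 2 (real (n j))"
    and w: "\<And>j. real (w j) = real (l j) - log 2 (real (n j))"
  shows "eventually (\<lambda>j. 2 \<le> n j \<and> 2 \<le> \<epsilon> * real (w j)) sequentially"
proof -
  define c where "c = \<epsilon> * (\<beta> - 1) / ln 2"
  have "filterlim (\<lambda>j. ln (real (n j))) at_top sequentially"
    using filterlim_compose[OF ln_at_top filterlim_compose[OF filterlim_real_sequentially n]] .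
  then have "filterlim (\<lambda>j. c * ln (real (n j))) at_top sequentially"
    using assms by (intro filterlim_tendsto_pos_mult_at_top[OF tendsto_const]) (simp_all add: c_def)
  moreover have "\<epsilon> * real (w j) = c * ln (real (n j))" for j
    by (simp add: c_def w l log_def right_diff_distrib left_diff_distrib diff_divide_distrib mult.assoc)
  ultimately have "filterlim (\<lambda>j. \<epsilon> * real (w j)) at_top sequentially" by (simp only:)
  then have "eventually (\<lambda>j. 2 \<le> \<epsilon> * real (w j)) sequentially"
    by (rule filterlim_at_top[THEN iffD1, rule_format])
  moreover have "eventually (\<lambda>j. 2 \<le> n j) sequentially"
    using n by (rule filterlim_at_top[THEN iffD1, rule_format])
  ultimately show ?thesis by (simp add: eventually_conj_iff)
qed

lemma exp_plus_powr_LIMSEQ_zero: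
  fixes c :: real
  assumes "c > 0"
  shows "(\<lambda>m. exp (-2 * real m * c) + 2 * 2 powr (- real m)) \<longlonglongrightarrow> 0"
proof -
  have "exp (-2 * real m * c) = exp (-2 * c) ^ m" for m
    by (simp add: exp_of_nat_mult[symmetric] mult_ac)
  moreover have "2 powr (- real m) = (1 / 2 :: real) ^ m" for m
    by (simp add: powr_minus powr_realpow power_one_over inverse_eq_divide)
  moreover have "(\<lambda>m. exp (-2 * c) ^ m + 2 * (1 / 2 :: real) ^ m) \<longlonglongrightarrow> 0"
    using assms by (intro tendsto_add_zero tendsto_mult_right_zero LIMSEQ_power_zero) auto
  ultimately show ?thesis by (simp only:)
qed

theorem lemma1:
  fixes pc pe ps \<beta> \<epsilon> :: real and n l k w :: "nat \<Rightarrow> nat"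
  assumes "pc \<ge> 0" and "pe \<ge> 0" and "ps \<ge> 0" and "pc + pe + ps = 1"
    and "\<forall>j. ps / (2 ^ l j - 1) < pc"
    and "\<beta> > 1" and "\<epsilon> > 0"
    and "filterlim n at_top sequentially"
    and "\<forall>j. real (l j) = \<beta> * log 2 (real (n j))"
    and "\<forall>j. real (k j) = real (n j) * (pc - 2 * \<epsilon>)"
    and "\<forall>j. real (w j) = real (l j) - log 2 (real (n j))"
  shows "\<exists>enc dec. (\<forall>j. is_code (n j) (l j) (k j) (w j) (enc j)) \<and>
           (\<lambda>j. error_prob pc pe ps (l j) (k j) (w j) (enc j) (dec j)) \<longlonglongrightarrow> 0"
proof -
  define a where "a m = exp (-2 * real m * \<epsilon>^2) + 2 * 2 powr (- real m)" for m
  have "\<forall>j. \<exists>enc dec. is_code (n j) (l j) (k j) (w j) enc \<and> (2 \<le> n j \<and> 2 \<le> \<epsilon> * real (w j) \<longrightarrow>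
      error_prob pc pe ps (l j) (k j) (w j) enc dec \<le> a (n j))"
    unfolding a_def by (intro allI exists_code_error_le_exp[OF assms(1-4,6,7) assms(9-11)[rule_format]])
  then obtain enc dec where codes: "\<forall>j. is_code (n j) (l j) (k j) (w j) (enc j) \<and>
      (2 \<le> n j \<and> 2 \<le> \<epsilon> * real (w j) \<longrightarrow> error_prob pc pe ps (l j) (k j) (w j) (enc j) (dec j) \<le> a (n j))"
    unfolding choice_iff by (elim exE)
  have "eventually (\<lambda>j. 2 \<le> n j \<and> 2 \<le> \<epsilon> * real (w j)) sequentially"
    using assms(6-9,11) by (intro eventually_large_blocks) auto
  then have upper: "eventually (\<lambda>j. error_prob pc pe ps (l j) (k j) (w j) (enc j) (dec j) \<le> a (n j))
      sequentially"
    by (rule eventually_mono) (use codes in blast)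
  have lower: "eventually (\<lambda>j. 0 \<le> error_prob pc pe ps (l j) (k j) (w j) (enc j) (dec j)) sequentially"
    by (simp add: error_prob_def)
  have "(\<lambda>j. a (n j)) \<longlonglongrightarrow> 0"
    using filterlim_compose[OF exp_plus_powr_LIMSEQ_zero assms(8)] assms(7) by (simp add: a_def)
  with lower upper have "(\<lambda>j. error_prob pc pe ps (l j) (k j) (w j) (enc j) (dec j)) \<longlonglongrightarrow> 0"
    by (rule tendsto_sandwich[OF _ _ tendsto_const])
  moreover have "\<forall>j. is_code (n j) (l j) (k j) (w j) (enc j)" using codes by blast
  ultimately show ?thesis by blast
qed

end
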